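(* Let $D$ be a Newton diagram in $2$ variables whose support $K$ has size $d$, is connected, and contains $(0,0)$. Let $k<d$ and suppose $K$ contains all $m\in\mathbb N_0^2$ with $|m|\le k-1$. Then there is an extension $D'$ of $D$ with $\#(D')\le\#(D)$ whose support contains all $m\in\mathbb N_0^2$ with $|m|\le k$.
   Context: For $m\in\mathbb Z^n$ write $|m|=m_1+\dots+m_n$; $e_1,\dots,e_n$ is the standard basis. A Newton diagram in $n$ variables is a function $D\colon\mathbb Z^n\to\{0,P,N\}$ ($P,N$ formal symbols) whose support $K=D^{-1}(\{P,N\})$ is a finite nonempty subset of $\mathbb N_0^n$. For $a\in\mathbb Z^n$ let $E(a)=\{a,a-e_1,\dots,a-e_n\}$; $E(a)$ is a node of $D$ if the image $D(E(a))$ equals $\{P\}$, $\{N\}$, $\{0,P\}$ or $\{0,N\}$. $\#(D)$ is the number of $a\in\mathbb Z^n$ for which $E(a)$ is a node. Two distinct points $m,m'$ are adjacent if $m-m'\in\{\pm e_j\}\cup\{e_j-e_k: j\ne k\}$; $K$ is connected if any two points of $K$ are joined by a path of successively adjacent points of $K$. The size of $K$ is $k-|a|+1$ where $k=\max_{m\in K}|m|$ and $a_j=\min_{m\in K}m_j$. A Newton diagram $D'$ with support $K'$ is an extension of $D$ if $K\subset K'$ and $D'|_K=D|_K$. *)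

theory Defs
  imports Main
begin

datatype sgn = Zero | P | N

type_synonym diagram = "int \<times> int \<Rightarrow> sgn"

definition supp :: "diagram \<Rightarrow> (int \<times> int) set" where
  "supp D = {m. D m \<noteq> Zero}"

definition newton_diagram :: "diagram \<Rightarrow> bool" where
  "newton_diagram D \<longleftrightarrow> finite (supp D) \<and> supp D \<noteq> {} \<and>
     (\<forall>m \<in> supp D. fst m \<ge> 0 \<and> snd m \<ge> 0)"

definition absm :: "int \<times> int \<Rightarrow> int" where
  "absm m = fst m + snd m"

definition Eset :: "int \<times> int \<Rightarrow> (int \<times> int) set" where
  "Eset a = {a, (fst a - 1, snd a), (fst a, snd a - 1)}"

definition is_node :: "diagram \<Rightarrow> int \<times> int \<Rightarrow> bool" where
  "is_node D a \<longleftrightarrow> D ` Eset a \<in> {{P}, {N}, {Zero, P}, {Zero, N}}"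

definition num_nodes :: "diagram \<Rightarrow> nat" where
  "num_nodes D = card {a. is_node D a}"

definition adjacent :: "int \<times> int \<Rightarrow> int \<times> int \<Rightarrow> bool" where
  "adjacent m m' \<longleftrightarrow> m \<noteq> m' \<and>
     (fst m - fst m', snd m - snd m') \<in> {(1,0), (-1,0), (0,1), (0,-1), (1,-1), (-1,1)}"

definition connected_set :: "(int \<times> int) set \<Rightarrow> bool" where
  "connected_set K \<longleftrightarrow> (\<forall>m \<in> K. \<forall>m' \<in> K.
     (\<lambda>x y. x \<in> K \<and> y \<in> K \<and> adjacent x y)\<^sup>*\<^sup>* m m')"

definition size_of :: "(int \<times> int) set \<Rightarrow> int" where
  "size_of K = Max (absm ` K) - (Min (fst ` K) + Min (snd ` K)) + 1"

definition extension :: "diagram \<Rightarrow> diagram \<Rightarrow> bool" where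
  "extension D' D \<longleftrightarrow> newton_diagram D' \<and> supp D \<subseteq> supp D' \<and>
     (\<forall>m \<in> supp D. D' m = D m)"

end

theory Submission
  imports Defs
begin

(* Adjacent points differ in level |m| by at most one, so the connected
   set K, which contains (0,0) and a point of level >= k (its size exceeds k), meets the
   level k.  We extend D only on the empty points of level k, with alternating signs along
   each run of empty positions; then the two lower neighbours of a point of level k+1 that
   were both filled carry opposite signs, so new nodes can only appear at the corners
   (0,k+1) and (k+1,0).  The left end run starts with the sign opposite to D(0,k-1) and the
   right end run ends with the sign opposite to D(k-1,0) (they are different runs because
   level k meets K).  So if (0,k+1) becomes a node, then (0,k) was a node of D and no longer
   is one, and symmetrically for (k+1,0); a counting lemma turns this matching into the
   inequality for the number of nodes. *)

section \<open>Nodes as a condition on three signs\<close>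

fun neg_sgn :: "sgn \<Rightarrow> sgn" where
  "neg_sgn P = N" | "neg_sgn N = P" | "neg_sgn Zero = Zero"

lemma neg_sgn_neg_sgn [simp]: "neg_sgn (neg_sgn x) = x"
  by (cases x) auto

lemma neg_sgn_nonzero: "x \<noteq> Zero \<Longrightarrow> neg_sgn x \<noteq> Zero"
  by (cases x) auto

definition node_triple :: "sgn \<Rightarrow> sgn \<Rightarrow> sgn \<Rightarrow> bool" where
  "node_triple x y z \<longleftrightarrow>
     (P \<in> {x, y, z} \<and> N \<notin> {x, y, z}) \<or> (N \<in> {x, y, z} \<and> P \<notin> {x, y, z})"

lemma node_value_set_iff:
  "(S::sgn set) \<in> {{P}, {N}, {Zero, P}, {Zero, N}} \<longleftrightarrow> (P \<in> S \<and> N \<notin> S) \<or> (N \<in> S \<and> P \<notin> S)"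
proof -
  have "S \<in> Pow {Zero, P, N}" using sgn.exhaust by blast
  then show ?thesis by (simp add: Pow_insert) auto
qed

lemma is_node_iff: "is_node G (x, y) \<longleftrightarrow> node_triple (G (x, y)) (G (x - 1, y)) (G (x, y - 1))"
  unfolding is_node_def Eset_def node_value_set_iff node_triple_def by simp

lemma node_triple_extension:
  assumes "node_triple x' y' z'" "\<not> node_triple x y z"
    and "x \<noteq> Zero \<Longrightarrow> x' = x" "y \<noteq> Zero \<Longrightarrow> y' = y" "z \<noteq> Zero \<Longrightarrow> z' = z"
  shows "x = Zero \<and> y = Zero \<and> z = Zero"
  using assms by (cases x; cases y; cases z) (auto simp: node_triple_def)

lemma not_node_triple_opposite: "v \<noteq> Zero \<Longrightarrow> \<not> node_triple u v (neg_sgn v)"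
  by (cases v; cases u) (auto simp: node_triple_def)

text \<open>Every node lies in the support or in one of its two unit translates, so a diagram with
  finite support has finitely many nodes.\<close>

lemma finite_nodes:
  assumes "finite (supp G)"
  shows "finite {a. is_node G a}"
proof (rule finite_subset)
  show "{a. is_node G a} \<subseteq> supp G \<union> (\<lambda>(x, y). (x + 1, y)) ` supp G \<union> (\<lambda>(x, y). (x, y + 1)) ` supp G"
  proof
    fix a assume "a \<in> {a. is_node G a}"
    moreover obtain x y where a: "a = (x, y)" by fastforce
    ultimately have "(x, y) \<in> supp G \<or> (x - 1, y) \<in> supp G \<or> (x, y - 1) \<in> supp G"
      by (auto simp: is_node_iff node_triple_def supp_def)
    then show "a \<in> supp G \<union> (\<lambda>(x, y). (x + 1, y)) ` supp G \<union> (\<lambda>(x, y). (x, y + 1)) ` supp G"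
      unfolding a by (auto intro: rev_image_eqI)
  qed
  show "finite (supp G \<union> (\<lambda>(x, y). (x + 1, y)) ` supp G \<union> (\<lambda>(x, y). (x, y + 1)) ` supp G)"
    using assms by simp
qed

lemma card_le_if_gained_from_lost:
  assumes "finite A" "B - A \<subseteq> h ` (A - B)"
  shows "card B \<le> card A"
proof -
  have "B \<subseteq> A \<union> h ` (A - B)" using assms(2) by blast
  then have "finite B" using assms(1) by (auto intro: finite_subset)
  have "card B = card (A \<inter> B) + card (B - A)"
    using \<open>finite B\<close> card_Int_Diff[of B A] by (simp add: Int_commute)
  also have "card (B - A) \<le> card (h ` (A - B))" using assms by (intro card_mono) auto
  also have "card (h ` (A - B)) \<le> card (A - B)" using assms by (intro card_image_le) auto
  also have "card (A \<inter> B) + card (A - B) = card A" by (rule card_Int_Diff[OF assms(1), symmetric])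
  finally show ?thesis by simp
qed

section \<open>Connected supports cross every intermediate level\<close>

text \<open>Adjacent points differ in level by at most one; hence a connected set containing points
  of levels at most and at least l contains a point of level exactly l.\<close>

lemma connected_level_crossing:
  assumes "connected_set K" "p \<in> K" "q \<in> K" "absm p \<le> l" "l \<le> absm q"
  shows "\<exists>r \<in> K. absm r = l"
proof -
  have "(\<lambda>x y. x \<in> K \<and> y \<in> K \<and> adjacent x y)\<^sup>*\<^sup>* p q"
    using assms(1-3) by (simp add: connected_set_def)
  then show ?thesis using assms(5)
  proof (induction rule: rtranclp_induct)
    case base
    then show ?case using assms(2,4) by force
  next
    case (step y z)
    have "absm z \<le> absm y + 1" using step.hyps(2) by (auto simp: adjacent_def absm_def)
    then show ?case using step by (cases "l \<le> absm y") force+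
  qed
qed

lemma size_of_with_origin:
  assumes "newton_diagram D" "(0, 0) \<in> supp D"
  shows "size_of (supp D) = Max (absm ` supp D) + 1"
proof -
  have fin: "finite (supp D)" and nonneg: "\<forall>m\<in>supp D. 0 \<le> fst m \<and> 0 \<le> snd m"
    using assms(1) by (auto simp: newton_diagram_def)
  have "Min (fst ` supp D) = 0" "Min (snd ` supp D) = 0"
    using fin nonneg assms(2) by (auto intro!: Min_eqI rev_image_eqI)
  then show ?thesis by (simp add: size_of_def)
qed

lemma level_meets_support:
  assumes "newton_diagram D" "size_of (supp D) = d" "connected_set (supp D)"
    and "(0, 0) \<in> supp D" "int k < d"
  shows "\<exists>i. 0 \<le> i \<and> i \<le> int k \<and> D (i, int k - i) \<noteq> Zero"
proof -
  have fin: "finite (supp D)" and nonneg: "\<forall>m\<in>supp D. 0 \<le> fst m \<and> 0 \<le> snd m"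
    using assms(1) by (auto simp: newton_diagram_def)
  have "Max (absm ` supp D) \<in> absm ` supp D" using fin assms(4) by (intro Max_in) auto
  then obtain q where "q \<in> supp D" "int k \<le> absm q"
    using assms size_of_with_origin by force
  then have "\<exists>r \<in> supp D. absm r = int k"
    using connected_level_crossing[OF assms(3,4)] by (simp add: absm_def)
  then obtain a b where r: "(a, b) \<in> supp D" "a + b = int k" by (auto simp: absm_def)
  have "0 \<le> a" "0 \<le> b" using r(1) nonneg by force+
  moreover have "int k - a = b" using r by linarith
  then have "D (a, int k - a) \<noteq> Zero" using r(1) by (simp add: supp_def)
  ultimately show ?thesis using r(2) by (intro exI[of _ a]) auto
qed

section \<open>Filling the level k\<close>

text \<open>Position i of level k is the point (i, k - i).  It lies in the left gap if all
  positions before it are empty in D.\<close>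

definition left_gap :: "diagram \<Rightarrow> nat \<Rightarrow> int \<Rightarrow> bool" where
  "left_gap D k i \<longleftrightarrow> (\<forall>j. 0 \<le> j \<and> j < i \<longrightarrow> D (j, int k - j) = Zero)"

text \<open>Alternating signs, anchored at the left end in the left gap and at the right end
  otherwise.\<close>

definition fill_value :: "diagram \<Rightarrow> nat \<Rightarrow> int \<Rightarrow> sgn" where
  "fill_value D k i =
     (if left_gap D k i
      then (if even i then neg_sgn (D (0, int k - 1)) else D (0, int k - 1))
      else (if even (int k - i) then neg_sgn (D (int k - 1, 0)) else D (int k - 1, 0)))"

definition fill_level :: "diagram \<Rightarrow> nat \<Rightarrow> diagram" where
  "fill_level D k m =
     (if D m \<noteq> Zero then D m
      else if 0 \<le> fst m \<and> 0 \<le> snd m \<and> absm m = int k then fill_value D k (fst m)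
      else Zero)"

text \<open>Across an empty position the fill values alternate: an empty position does not
  change whether the next one is in the left gap.\<close>

lemma fill_value_step:
  assumes "0 \<le> i" "D (i, int k - i) = Zero"
  shows "fill_value D k (i + 1) = neg_sgn (fill_value D k i)"
proof -
  have "left_gap D k (i + 1) \<longleftrightarrow> left_gap D k i"
    using assms unfolding left_gap_def by (metis zless_add1_eq)
  moreover have "even (int k - (i + 1)) \<longleftrightarrow> \<not> even (int k - i)"
    by (simp add: algebra_simps)
  ultimately show ?thesis by (auto simp: fill_value_def)
qed

locale level_filling =
  fixes D :: diagram and k :: nat
  assumes newton: "newton_diagram D"
    and k_pos: "1 \<le> k"
    and lower_full: "\<forall>m. fst m \<ge> 0 \<and> snd m \<ge> 0 \<and> absm m \<le> int k - 1 \<longrightarrow> m \<in> supp D"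
    and level_hit: "\<exists>i. 0 \<le> i \<and> i \<le> int k \<and> D (i, int k - i) \<noteq> Zero"
begin

lemma support_nonneg: "D m \<noteq> Zero \<Longrightarrow> 0 \<le> fst m \<and> 0 \<le> snd m"
  using newton by (cases m) (auto simp: newton_diagram_def supp_def)

lemma left_anchor_nonzero: "D (0, int k - 1) \<noteq> Zero"
  using lower_full[rule_format, of "(0, int k - 1)"] k_pos by (auto simp: supp_def absm_def)

lemma right_anchor_nonzero: "D (int k - 1, 0) \<noteq> Zero"
  using lower_full[rule_format, of "(int k - 1, 0)"] k_pos by (auto simp: supp_def absm_def)

lemma fill_value_nonzero: "fill_value D k i \<noteq> Zero"
  using left_anchor_nonzero right_anchor_nonzero by (auto simp: fill_value_def neg_sgn_nonzero)

lemma fill_level_extension: "extension (fill_level D k) D"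
proof -
  have "supp (fill_level D k) \<subseteq> supp D \<union> {0..int k} \<times> {0..int k}"
    by (auto simp: fill_level_def supp_def absm_def split: if_splits)
  then have "finite (supp (fill_level D k))"
    using newton by (auto simp: newton_diagram_def intro: finite_subset)
  moreover have "supp D \<subseteq> supp (fill_level D k)"
    by (auto simp: fill_level_def supp_def)
  moreover have "\<forall>m\<in>supp (fill_level D k). 0 \<le> fst m \<and> 0 \<le> snd m"
    using support_nonneg by (auto simp: fill_level_def supp_def split: if_splits)
  moreover have "supp D \<noteq> {}" using newton by (simp add: newton_diagram_def)
  ultimately have "newton_diagram (fill_level D k) \<and> supp D \<subseteq> supp (fill_level D k)"
    unfolding newton_diagram_def by blast
  moreover have "\<forall>m\<in>supp D. fill_level D k m = D m" by (simp add: fill_level_def supp_def)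
  ultimately show ?thesis unfolding extension_def by blast
qed

lemma fill_level_covers:
  assumes "fst m \<ge> 0" "snd m \<ge> 0" "absm m \<le> int k"
  shows "m \<in> supp (fill_level D k)"
proof (cases "D m = Zero")
  case True
  then have "absm m = int k" using assms lower_full by (force simp: supp_def)
  then show ?thesis using True assms fill_value_nonzero by (simp add: fill_level_def supp_def)
qed (simp add: fill_level_def supp_def)

text \<open>A new node has all of its E-set empty in D, so it sits on level k + 1 with both
  lower neighbours on level k.\<close>

lemma new_node_level:
  assumes "is_node (fill_level D k) (x, y)" "\<not> is_node D (x, y)"
  shows "D (x, y) = Zero \<and> D (x - 1, y) = Zero \<and> D (x, y - 1) = Zero
    \<and> 0 \<le> x \<and> 0 \<le> y \<and> x + y = int k + 1"
proof -
  let ?F = "fill_level D k"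
  have new: "node_triple (?F (x, y)) (?F (x - 1, y)) (?F (x, y - 1))"
    using assms(1) by (simp add: is_node_iff)
  have agree: "\<And>m. D m \<noteq> Zero \<Longrightarrow> ?F m = D m" by (simp add: fill_level_def)
  have empty: "D (x, y) = Zero \<and> D (x - 1, y) = Zero \<and> D (x, y - 1) = Zero"
    using node_triple_extension[OF new _ agree agree agree] assms(2) by (simp add: is_node_iff)
  have "\<not> (?F (x, y) = Zero \<and> ?F (x - 1, y) = Zero \<and> ?F (x, y - 1) = Zero)"
    using new by (auto simp: node_triple_def)
  then have on_level: "(0 \<le> x \<and> 0 \<le> y \<and> x + y = int k) \<or> (1 \<le> x \<and> 0 \<le> y \<and> x + y = int k + 1)
      \<or> (0 \<le> x \<and> 1 \<le> y \<and> x + y = int k + 1)"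
    using empty by (auto simp: fill_level_def absm_def split: if_splits)
  have "\<not> (0 \<le> x \<and> 0 \<le> y \<and> x + y = int k)"
  proof
    assume "0 \<le> x \<and> 0 \<le> y \<and> x + y = int k"
    then have "(x - 1, y) \<in> supp D \<or> (x, y - 1) \<in> supp D"
      using k_pos lower_full by (cases "1 \<le> x") (auto simp: absm_def)
    then show False using empty by (auto simp: supp_def)
  qed
  then show ?thesis using empty on_level by auto
qed

text \<open>The alternation rules out new nodes away from the two corners of level k + 1.\<close>

lemma new_node_at_corner:
  assumes "is_node (fill_level D k) a" "\<not> is_node D a"
  shows "(a = (0, int k + 1) \<and> D (0, int k) = Zero) \<or> (a = (int k + 1, 0) \<and> D (int k, 0) = Zero)"
proof -
  obtain x y where a: "a = (x, y)" by (cases a)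
  have lvl: "D (x, y) = Zero \<and> D (x - 1, y) = Zero \<and> D (x, y - 1) = Zero
      \<and> 0 \<le> x \<and> 0 \<le> y \<and> x + y = int k + 1"
    using new_node_level assms a by blast
  have "\<not> (1 \<le> x \<and> 1 \<le> y)"
  proof
    assume inner: "1 \<le> x \<and> 1 \<le> y"
    have y: "int k - (x - 1) = y" using lvl by linarith
    have "fill_level D k (x - 1, y) = fill_value D k (x - 1)"
      "fill_level D k (x, y - 1) = fill_value D k x"
      using lvl inner by (simp_all add: fill_level_def absm_def)
    moreover have "fill_value D k x = neg_sgn (fill_value D k (x - 1))"
      using fill_value_step[of "x - 1" D k, unfolded y] lvl inner by simp
    ultimately show False
      using assms(1) a not_node_triple_opposite[OF fill_value_nonzero]
      by (simp add: is_node_iff)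
  qed
  then have "(x = 0 \<and> y = int k + 1) \<or> (y = 0 \<and> x = int k + 1)" using lvl by arith
  then show ?thesis using lvl a by auto
qed

text \<open>A corner that becomes a node pays for itself: the empty point below it on level k was
  a node of D and the chosen anchor sign removes it.\<close>

lemma left_corner_node_lost:
  assumes "D (0, int k) = Zero"
  shows "is_node D (0, int k) \<and> \<not> is_node (fill_level D k) (0, int k)"
proof -
  have left: "D (-1, int k) = Zero" using support_nonneg[of "(-1, int k)"] by auto
  have "fill_level D k (0, int k) = neg_sgn (D (0, int k - 1))"
    using assms by (auto simp: fill_level_def absm_def fill_value_def left_gap_def)
  moreover have "fill_level D k (-1, int k) = Zero" "fill_level D k (0, int k - 1) = D (0, int k - 1)"
    using left left_anchor_nonzero by (simp_all add: fill_level_def)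
  ultimately show ?thesis using assms left left_anchor_nonzero
    by (cases "D (0, int k - 1)") (auto simp: is_node_iff node_triple_def)
qed

lemma right_corner_node_lost:
  assumes "D (int k, 0) = Zero"
  shows "is_node D (int k, 0) \<and> \<not> is_node (fill_level D k) (int k, 0)"
proof -
  have outside: "D (int k, -1) = Zero" using support_nonneg[of "(int k, -1)"] by auto
  obtain i where i: "0 \<le> i" "i \<le> int k" "D (i, int k - i) \<noteq> Zero" using level_hit by blast
  then have "i < int k" using assms by (cases "i = int k") auto
  then have "\<not> left_gap D k (int k)" using i by (auto simp: left_gap_def)
  then have "fill_level D k (int k, 0) = neg_sgn (D (int k - 1, 0))"
    using assms by (simp add: fill_level_def absm_def fill_value_def)
  moreover have "fill_level D k (int k, -1) = Zero" "fill_level D k (int k - 1, 0) = D (int k - 1, 0)"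
    using outside right_anchor_nonzero by (simp_all add: fill_level_def)
  ultimately show ?thesis using assms outside right_anchor_nonzero
    by (cases "D (int k - 1, 0)") (auto simp: is_node_iff node_triple_def)
qed

text \<open>Each new corner node is the image of the lost node directly below it under the map
  sending (0, j) to (0, j + 1) and (i, j) to (i + 1, j) for i \<noteq> 0; the counting
  principle then bounds the number of nodes.\<close>

lemma fill_level_num_nodes: "num_nodes (fill_level D k) \<le> num_nodes D"
proof -
  define above :: "int \<times> int \<Rightarrow> int \<times> int"
    where "above = (\<lambda>(x, y). if x = 0 then (0, y + 1) else (x + 1, y))"
  have "{a. is_node (fill_level D k) a} - {a. is_node D a}
      \<subseteq> above ` ({a. is_node D a} - {a. is_node (fill_level D k) a})"
  proof
    fix a assume "a \<in> {a. is_node (fill_level D k) a} - {a. is_node D a}"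
    then have "is_node (fill_level D k) a" "\<not> is_node D a" by auto
    then consider "a = (0, int k + 1)" "D (0, int k) = Zero" | "a = (int k + 1, 0)" "D (int k, 0) = Zero"
      using new_node_at_corner by blast
    then show "a \<in> above ` ({a. is_node D a} - {a. is_node (fill_level D k) a})"
    proof cases
      case 1
      then show ?thesis using left_corner_node_lost
        by (intro rev_image_eqI[of "(0, int k)"]) (auto simp: above_def)
    next
      case 2
      then show ?thesis using right_corner_node_lost k_pos
        by (intro rev_image_eqI[of "(int k, 0)"]) (auto simp: above_def)
    qed
  qed
  moreover have "finite {a. is_node D a}" using newton finite_nodes by (auto simp: newton_diagram_def)
  ultimately show ?thesis unfolding num_nodes_def by (intro card_le_if_gained_from_lost)
qed

end

theorem mainTheorem6:
  fixes D :: diagram and d :: int and k :: nat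
  assumes "newton_diagram D"
    and "size_of (supp D) = d"
    and "connected_set (supp D)"
    and "(0, 0) \<in> supp D"
    and "int k < d"
    and "\<forall>m. fst m \<ge> 0 \<and> snd m \<ge> 0 \<and> absm m \<le> int k - 1 \<longrightarrow> m \<in> supp D"
  shows "\<exists>D'. extension D' D \<and> num_nodes D' \<le> num_nodes D \<and>
           (\<forall>m. fst m \<ge> 0 \<and> snd m \<ge> 0 \<and> absm m \<le> int k \<longrightarrow> m \<in> supp D')"
proof (cases "k = 0")
  case True
  text \<open>Level 0 consists of the origin alone, so D itself is the required extension.\<close>
  have "m \<in> supp D" if "fst m \<ge> 0" "snd m \<ge> 0" "absm m \<le> int k" for m
  proof -
    have "m = (0, 0)" using that True by (cases m) (auto simp: absm_def)
    then show ?thesis using assms(4) by simp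
  qed
  then show ?thesis using assms(1) by (intro exI[of _ D]) (auto simp: extension_def)
next
  case False
  then interpret level_filling D k
    using assms level_meets_support by unfold_locales auto
  show ?thesis
    using fill_level_extension fill_level_num_nodes fill_level_covers
    by (intro exI[of _ "fill_level D k"]) auto
qed

end
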